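(* Let $T$ be a triangulation of the oriented 2-sphere (a simplicial complex), $z:\mathcal V(T)\to\mathbb C$ injective with no degenerate face. Let $\mathcal A_T=-\sum_f\mathrm{Vol}(f)$, the sum over all faces listed in positive cyclic order, and $D_{u\bar v}=\frac{\partial^2\mathcal A_T}{\partial z_u\partial\bar z_v}$. Then, as matrices indexed by $\mathcal V(T)$, $$D=\frac1{4\mathrm i}\,A\,E\,A^\dagger,$$ where $A^\dagger$ is the conjugate transpose of $A$.
   Context: For a face listed $(z_a,z_b,z_c)$, $\mathrm{Vol}=\mathrm{Im}\,\mathrm{Li}_2(u)+\ln|u|\,\mathrm{Arg}(1-u)$, $u=\frac{z_c-z_a}{z_b-z_a}$ (Bloch–Wigner function). $A_{v,e}=\frac1{z_v-z_{v'}}$ if $e=\{v,v'\}$ and $0$ if $v\notin e$. $E_{e,e'}$: for $e\neq e'$ in a common face with edges $\{a,b\},\{b,c\},\{c,a\}$ in positive cyclic order, $E_{e,e'}=-1$ if $e'$ immediately follows $e$ and $+1$ if $e'$ immediately precedes $e$; otherwise $0$. Derivatives are Wirtinger derivatives. *)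

theory Defs
  imports "HOL-Analysis.Analysis"
begin

text \<open>Principal branch of the dilogarithm, Li2(u) = - int_0^u Log(1-t)/t dt along the
  straight segment from 0 to u (analytic on the complement of [1, infinity)).\<close>
definition Li2 :: "complex \<Rightarrow> complex" where
  "Li2 u = - integral {0..1::real} (\<lambda>s. Ln (1 - complex_of_real s * u) / complex_of_real s)"

definition bloch_wigner :: "complex \<Rightarrow> real" where
  "bloch_wigner u = Im (Li2 u) + ln (cmod u) * Arg (1 - u)"

definition Vol :: "complex \<Rightarrow> complex \<Rightarrow> complex \<Rightarrow> real" where
  "Vol za zb zc = bloch_wigner ((zc - za) / (zb - za))"

text \<open>An abstract pure 2-dimensional simplicial complex on the (finite) vertex type 'v
  is given by its set S of 2-simplices; its geometric realization in real^'v uses the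
  standard basis vectors as vertices.\<close>
definition realization :: "('v::finite) set set \<Rightarrow> (real ^ 'v) set" where
  "realization S = (\<Union>f\<in>S. convex hull ((\<lambda>i. axis i (1::real)) ` f))"

definition edges :: "'v set set \<Rightarrow> 'v set set" where
  "edges S = {e. card e = 2 \<and> (\<exists>f\<in>S. e \<subseteq> f)}"

definition sphere_triangulation :: "('v::finite) set set \<Rightarrow> bool" where
  "sphere_triangulation S \<longleftrightarrow>
     (\<forall>f\<in>S. card f = 3) \<and> \<Union>S = UNIV \<and>
     realization S homeomorphic sphere (0::real^3) 1"

text \<open>pos is the set of listings (a,b,c) of faces in positive cyclic order: it is closed
  under cyclic rotation, each face has such a listing, no face has both cyclic orders,
  and the orientation is coherent (each directed edge (a,b) occurs in at most one
  positively listed face), i.e. it comes from an orientation of the sphere.\<close>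
definition orientation :: "'v set set \<Rightarrow> ('v \<times> 'v \<times> 'v) set \<Rightarrow> bool" where
  "orientation S pos \<longleftrightarrow>
     (\<forall>(a,b,c)\<in>pos. {a,b,c} \<in> S \<and> (b,c,a) \<in> pos \<and> (a,c,b) \<notin> pos) \<and>
     (\<forall>f\<in>S. \<exists>a b c. (a,b,c) \<in> pos \<and> f = {a,b,c}) \<and>
     (\<forall>a b c c'. (a,b,c) \<in> pos \<longrightarrow> (a,b,c') \<in> pos \<longrightarrow> c = c')"

definition listing :: "('v \<times> 'v \<times> 'v) set \<Rightarrow> 'v set \<Rightarrow> 'v \<times> 'v \<times> 'v" where
  "listing pos f = (SOME t. t \<in> pos \<and> f = {fst t, fst (snd t), snd (snd t)})"

definition nondegenerate :: "('v \<Rightarrow> complex) \<Rightarrow> 'v set \<Rightarrow> bool" where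
  "nondegenerate z f \<longleftrightarrow> (\<forall>a\<in>f. \<forall>b\<in>f. \<forall>c\<in>f. a \<noteq> b \<longrightarrow> Im ((z c - z a) / (z b - z a)) = 0 \<longrightarrow> c = a \<or> c = b)"

definition action :: "'v set set \<Rightarrow> ('v \<times> 'v \<times> 'v) set \<Rightarrow> ('v \<Rightarrow> complex) \<Rightarrow> real" where
  "action S pos z = - (\<Sum>f\<in>S. (case listing pos f of (a,b,c) \<Rightarrow> Vol (z a) (z b) (z c)))"

definition pdx :: "'v \<Rightarrow> (('v \<Rightarrow> complex) \<Rightarrow> complex) \<Rightarrow> ('v \<Rightarrow> complex) \<Rightarrow> complex" where
  "pdx u F z = vector_derivative (\<lambda>t::real. F (z(u := z u + complex_of_real t))) (at 0)"

definition pdy :: "'v \<Rightarrow> (('v \<Rightarrow> complex) \<Rightarrow> complex) \<Rightarrow> ('v \<Rightarrow> complex) \<Rightarrow> complex" where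
  "pdy u F z = vector_derivative (\<lambda>t::real. F (z(u := z u + \<i> * complex_of_real t))) (at 0)"

definition wirt_z :: "'v \<Rightarrow> (('v \<Rightarrow> complex) \<Rightarrow> complex) \<Rightarrow> ('v \<Rightarrow> complex) \<Rightarrow> complex" where
  "wirt_z u F z = (pdx u F z - \<i> * pdy u F z) / 2"

definition wirt_zbar :: "'v \<Rightarrow> (('v \<Rightarrow> complex) \<Rightarrow> complex) \<Rightarrow> ('v \<Rightarrow> complex) \<Rightarrow> complex" where
  "wirt_zbar u F z = (pdx u F z + \<i> * pdy u F z) / 2"

definition Amat :: "('v \<Rightarrow> complex) \<Rightarrow> 'v \<Rightarrow> 'v set \<Rightarrow> complex" where
  "Amat z v e = (if v \<in> e then 1 / (z v - z (THE w. w \<in> e \<and> w \<noteq> v)) else 0)"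

definition Emat :: "('v \<times> 'v \<times> 'v) set \<Rightarrow> 'v set \<Rightarrow> 'v set \<Rightarrow> complex" where
  "Emat pos e e' =
     (if e \<noteq> e' \<and> (\<exists>a b c. (a,b,c) \<in> pos \<and> e = {a,b} \<and> e' = {b,c}) then -1
      else if e \<noteq> e' \<and> (\<exists>a b c. (a,b,c) \<in> pos \<and> e = {b,c} \<and> e' = {a,b}) then 1
      else 0)"

end

theory Submission
  imports Defs "HOL-Complex_Analysis.Complex_Analysis"
begin

text \<open>
  The action is minus the sum of the Bloch--Wigner function D over the shape parameters
  u = (z_c - z_a)/(z_b - z_a) of the faces, each a holomorphic function of the vertex coordinates.
  Since Li2' u = - Ln (1 - u) / u, the function D is smooth off the real axis with
  d/dz d/dzbar D(u) = (1/(u (1 - conj u)) - 1/(conj u (1 - u))) / (4 i), so by the chain rule the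
  mixed derivative of a face term is this quantity times du/dz_u times the conjugate of du/dz_v.
  A rational identity in z_b - z_a, z_c - z_a and their conjugates rewrites the product as 1/(4 i)
  times the six cross terms of the rows u and v of A over consecutive edges of the face, weighted
  by -1 or +1 according to the cyclic order; summed over the faces these weights give E.
\<close>

section \<open>The derivative of the dilogarithm\<close>

text \<open>The integrand of Li2, with its removable singularity at 0 filled by the limit -1 so that it is
  continuous on all of Li2_domain.\<close>
definition Li2_integrand :: "complex \<Rightarrow> complex" where
  "Li2_integrand t = (if t = 0 then -1 else Ln (1 - t) / t)"

definition Li2_domain :: "complex set" where
  "Li2_domain = {t. Im t \<noteq> 0 \<or> Re t < 1}"

lemma open_Li2_domain: "open Li2_domain"
proof -
  have "Li2_domain = {t. Im t \<noteq> 0} \<union> {t. Re t < 1}"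
    by (auto simp: Li2_domain_def)
  moreover have "open {t. Im t \<noteq> 0}"
    by (rule open_Collect_neq) (auto intro: continuous_intros)
  moreover have "open {t. Re t < 1}"
    by (rule open_Collect_less) (auto intro: continuous_intros)
  ultimately show ?thesis
    by (metis open_Un)
qed

lemma Li2_domain_0 [simp]: "0 \<in> Li2_domain"
  by (simp add: Li2_domain_def)

lemma one_minus_Li2_domain: "t \<in> Li2_domain \<Longrightarrow> 1 - t \<notin> \<real>\<^sub>\<le>\<^sub>0"
  by (auto simp: Li2_domain_def complex_nonpos_Reals_iff)

lemma has_field_derivative_Ln_one_minus:
  "1 - t \<notin> \<real>\<^sub>\<le>\<^sub>0 \<Longrightarrow> ((\<lambda>t. Ln (1 - t)) has_field_derivative - inverse (1 - t)) (at t)"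
  by (rule DERIV_chain2[of Ln, where Db = "-1", simplified])
    (auto intro!: has_field_derivative_Ln derivative_eq_intros)

lemma isCont_Li2_integrand:
  assumes "t \<in> Li2_domain"
  shows "isCont Li2_integrand t"
proof (cases "t = 0")
  case True
  have "((\<lambda>s. (Ln (1 - s) - Ln (1 - 0)) / (s - 0)) \<longlongrightarrow> - inverse (1 - 0)) (at 0)"
    using has_field_derivative_Ln_one_minus[of 0]
    by (simp add: has_field_derivative_iff complex_nonpos_Reals_iff)
  then have "((\<lambda>s. Ln (1 - s) / s) \<longlongrightarrow> -1) (at 0)"
    by simp
  then have "(Li2_integrand \<longlongrightarrow> -1) (at 0)"
    by (rule Lim_transform_eventually) (auto simp: Li2_integrand_def eventually_at_filter)
  then show ?thesis
    using True by (simp add: continuous_at Li2_integrand_def)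
next
  case False
  have "isCont (\<lambda>s. Ln (1 - s) / s) t"
    using False one_minus_Li2_domain[OF assms]
    by (auto intro!: continuous_intros isCont_o2[where g = Ln] simp: complex_nonpos_Reals_iff)
  moreover have "\<forall>\<^sub>F s in nhds t. Li2_integrand s = Ln (1 - s) / s"
    using eventually_nhds_in_open[of "- {0}" t] False
    by (auto simp: Li2_integrand_def elim!: eventually_mono)
  ultimately show ?thesis
    using isCont_cong[of Li2_integrand "\<lambda>s. Ln (1 - s) / s" t] by blast
qed

lemma continuous_on_Li2_integrand: "continuous_on Li2_domain Li2_integrand"
  by (simp add: continuous_at_imp_continuous_on isCont_Li2_integrand)

lemma field_differentiable_Li2_integrand:
  assumes "t \<in> Li2_domain - {0}"
  shows "Li2_integrand field_differentiable at t"
proof -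
  obtain d where "((\<lambda>s. Ln (1 - s) / s) has_field_derivative d) (at t)"
    using DERIV_divide[OF has_field_derivative_Ln_one_minus[OF one_minus_Li2_domain] DERIV_ident] assms
    by auto
  then have "(Li2_integrand has_field_derivative d) (at t)"
    by (rule has_field_derivative_transform_within_open[where S = "- {0}"])
      (use assms in \<open>auto simp: Li2_integrand_def\<close>)
  then show ?thesis
    by (auto simp: field_differentiable_def)
qed

lemma closed_segment_0_subset_Li2_domain:
  assumes "y \<in> Li2_domain"
  shows "closed_segment 0 y \<subseteq> Li2_domain"
proof
  fix x assume "x \<in> closed_segment 0 y"
  then obtain s :: real where s: "0 \<le> s" "s \<le> 1" "x = s *\<^sub>R y"
    by (auto simp: closed_segment_def)
  have "s * Re y < 1" if "Re y < 1"
  proof (cases "Re y \<le> 0")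
    case True
    then show ?thesis
      using s mult_nonneg_nonpos[of s "Re y"] by linarith
  next
    case False
    then show ?thesis
      using s that mult_left_le_one_le[of "Re y" s] by linarith
  qed
  then show "x \<in> Li2_domain"
    using assms s by (cases "s = 0") (auto simp: Li2_domain_def)
qed

lemma has_field_derivative_Li2_integrand_primitive:
  assumes "u \<in> Li2_domain"
  shows "((\<lambda>x. contour_integral (linepath 0 x) Li2_integrand) has_field_derivative Li2_integrand u) (at u)"
proof (rule triangle_contour_integrals_starlike_primitive[OF continuous_on_Li2_integrand
      Li2_domain_0 open_Li2_domain assms closed_segment_0_subset_Li2_domain])
  fix b c assume bc: "closed_segment b c \<subseteq> Li2_domain"
  then have hull: "convex hull {0, b, c} \<subseteq> Li2_domain"
    using starlike_convex_subset[of 0 Li2_domain b c] closed_segment_0_subset_Li2_domain by blast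
  then have "continuous_on (convex hull {0, b, c}) Li2_integrand"
    by (rule continuous_on_subset[OF continuous_on_Li2_integrand])
  then have "(Li2_integrand has_contour_integral 0) (linepath 0 b +++ linepath b c +++ linepath c 0)"
    using hull interior_subset
    by (force intro: field_differentiable_Li2_integrand Cauchy_theorem_triangle_cofinite[of _ _ _ _ "{0}"])
  then show "contour_integral (linepath 0 b) Li2_integrand + contour_integral (linepath b c) Li2_integrand
      + contour_integral (linepath c 0) Li2_integrand = 0"
    by (rule has_chain_integral_chain_integral3)
qed

lemma Li2_eq_contour_integral:
  assumes "u \<in> Li2_domain"
  shows "Li2 u = - contour_integral (linepath 0 u) Li2_integrand"
proof -
  have "Li2_integrand contour_integrable_on linepath 0 u"
    using continuous_on_subset[OF continuous_on_Li2_integrand closed_segment_0_subset_Li2_domain[OF assms]]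
    by (rule contour_integrable_continuous_linepath)
  then have "((\<lambda>s. Li2_integrand (linepath 0 u s) * u) has_integral
      contour_integral (linepath 0 u) Li2_integrand) {0..1}"
    using has_contour_integral_integral has_contour_integral_linepath by fastforce
  then have "((\<lambda>s. Ln (1 - complex_of_real s * u) / complex_of_real s) has_integral
      contour_integral (linepath 0 u) Li2_integrand) {0..1}"
    by (rule has_integral_spike_finite[of "{0}", rotated 2])
      (auto simp: Li2_integrand_def linepath_def scaleR_conv_of_real)
  then show ?thesis
    by (simp add: Li2_def integral_unique)
qed

lemma has_field_derivative_Li2:
  assumes "u \<in> Li2_domain"
  shows "(Li2 has_field_derivative - Li2_integrand u) (at u)"
  using DERIV_minus[OF has_field_derivative_Li2_integrand_primitive[OF assms]]
  by (rule has_field_derivative_transform_within_open[OF _ open_Li2_domain assms])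
    (simp add: Li2_eq_contour_integral)

section \<open>Wirtinger calculus\<close>

text \<open>p and q are the Wirtinger derivatives df/dz and df/dzbar of the real-differentiable f.\<close>
definition has_wirtinger_derivs :: "(complex \<Rightarrow> complex) \<Rightarrow> complex \<Rightarrow> complex \<Rightarrow> complex \<Rightarrow> bool" where
  "has_wirtinger_derivs f p q \<zeta> \<longleftrightarrow> (f has_derivative (\<lambda>h. p * h + q * cnj h)) (at \<zeta>)"

lemma has_wirtinger_derivs_cong:
  "has_wirtinger_derivs f p q \<zeta> \<Longrightarrow> p = p' \<Longrightarrow> q = q' \<Longrightarrow> has_wirtinger_derivs f p' q' \<zeta>"
  by simp

lemma has_wirtinger_derivs_holomorphic:
  "(f has_field_derivative d) (at \<zeta>) \<Longrightarrow> has_wirtinger_derivs f d 0 \<zeta>"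
  by (simp add: has_wirtinger_derivs_def has_field_derivative_def)

lemma has_wirtinger_derivs_const: "has_wirtinger_derivs (\<lambda>x. c) 0 0 \<zeta>"
  by (simp add: has_wirtinger_derivs_def)

lemma has_wirtinger_derivs_cnj:
  assumes "has_wirtinger_derivs f p q \<zeta>"
  shows "has_wirtinger_derivs (\<lambda>x. cnj (f x)) (cnj q) (cnj p) \<zeta>"
proof -
  have "((\<lambda>x. cnj (f x)) has_derivative (\<lambda>h. cnj (p * h + q * cnj h))) (at \<zeta>)"
    using bounded_linear.has_derivative[OF bounded_linear_cnj assms[unfolded has_wirtinger_derivs_def]] .
  then show ?thesis
    by (simp add: has_wirtinger_derivs_def algebra_simps)
qed

lemma has_wirtinger_derivs_add:
  assumes "has_wirtinger_derivs f p q \<zeta>" "has_wirtinger_derivs g p' q' \<zeta>"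
  shows "has_wirtinger_derivs (\<lambda>x. f x + g x) (p + p') (q + q') \<zeta>"
  using has_derivative_add[OF assms[unfolded has_wirtinger_derivs_def]]
  by (simp add: has_wirtinger_derivs_def algebra_simps)

lemma has_wirtinger_derivs_minus:
  assumes "has_wirtinger_derivs f p q \<zeta>"
  shows "has_wirtinger_derivs (\<lambda>x. - f x) (- p) (- q) \<zeta>"
  using has_derivative_minus[OF assms[unfolded has_wirtinger_derivs_def]]
  by (simp add: has_wirtinger_derivs_def)

lemma has_wirtinger_derivs_diff:
  assumes "has_wirtinger_derivs f p q \<zeta>" "has_wirtinger_derivs g p' q' \<zeta>"
  shows "has_wirtinger_derivs (\<lambda>x. f x - g x) (p - p') (q - q') \<zeta>"
  using has_wirtinger_derivs_add[OF assms(1) has_wirtinger_derivs_minus[OF assms(2)]] by simp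

lemma has_wirtinger_derivs_mult:
  assumes "has_wirtinger_derivs f p q \<zeta>" "has_wirtinger_derivs g p' q' \<zeta>"
  shows "has_wirtinger_derivs (\<lambda>x. f x * g x) (f \<zeta> * p' + p * g \<zeta>) (f \<zeta> * q' + q * g \<zeta>) \<zeta>"
  using has_derivative_mult[OF assms[unfolded has_wirtinger_derivs_def]]
  by (simp add: has_wirtinger_derivs_def algebra_simps)

lemma has_wirtinger_derivs_sum:
  "finite I \<Longrightarrow> (\<And>i. i \<in> I \<Longrightarrow> has_wirtinger_derivs (f i) (p i) (q i) \<zeta>) \<Longrightarrow>
    has_wirtinger_derivs (\<lambda>x. \<Sum>i\<in>I. f i x) (\<Sum>i\<in>I. p i) (\<Sum>i\<in>I. q i) \<zeta>"
  unfolding has_wirtinger_derivs_def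
  by (drule has_derivative_sum) (simp add: sum_distrib_right sum.distrib)

lemma has_wirtinger_derivs_sum_ex:
  assumes "finite I" and "\<And>i. i \<in> I \<Longrightarrow> \<exists>q. has_wirtinger_derivs (f i) (p i) q \<zeta>"
  shows "\<exists>q. has_wirtinger_derivs (\<lambda>x. \<Sum>i\<in>I. f i x) (\<Sum>i\<in>I. p i) q \<zeta>"
proof -
  obtain q where "\<And>i. i \<in> I \<Longrightarrow> has_wirtinger_derivs (f i) (p i) (q i) \<zeta>"
    using assms(2) by metis
  then show ?thesis
    using has_wirtinger_derivs_sum[OF assms(1)] by blast
qed

lemma has_wirtinger_derivs_compose_holomorphic:
  assumes "has_wirtinger_derivs f p q (g \<zeta>)" "(g has_field_derivative d) (at \<zeta>)"
  shows "has_wirtinger_derivs (\<lambda>x. f (g x)) (p * d) (q * cnj d) \<zeta>"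
  using diff_chain_at[OF assms(2)[unfolded has_field_derivative_def] assms(1)[unfolded has_wirtinger_derivs_def]]
  by (simp add: has_wirtinger_derivs_def o_def algebra_simps)

lemma has_wirtinger_derivs_transform_within_open:
  "has_wirtinger_derivs f p q \<zeta> \<Longrightarrow> open U \<Longrightarrow> \<zeta> \<in> U \<Longrightarrow> (\<And>x. x \<in> U \<Longrightarrow> f x = g x) \<Longrightarrow>
    has_wirtinger_derivs g p q \<zeta>"
  unfolding has_wirtinger_derivs_def using has_derivative_transform_within_open by blast

lemma has_vector_derivative_along_line:
  assumes "has_wirtinger_derivs f p q \<zeta>"
  shows "((\<lambda>t::real. f (\<zeta> + c * of_real t)) has_vector_derivative (c * p + cnj c * q)) (at 0)"
proof -
  have "((\<lambda>t::real. \<zeta> + c * of_real t) has_derivative (\<lambda>h. c * of_real h)) (at 0)"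
    by (auto intro!: derivative_eq_intros)
  then have "((f \<circ> (\<lambda>t::real. \<zeta> + c * of_real t)) has_derivative
      ((\<lambda>h. p * h + q * cnj h) \<circ> (\<lambda>h. c * of_real h))) (at 0)"
    using diff_chain_at assms[unfolded has_wirtinger_derivs_def] by fastforce
  moreover have "(\<lambda>h. p * h + q * cnj h) \<circ> (\<lambda>h. c * of_real h) = (\<lambda>h::real. h *\<^sub>R (c * p + cnj c * q))"
    by (auto simp: algebra_simps scaleR_conv_of_real)
  ultimately show ?thesis
    by (simp add: has_vector_derivative_def o_def)
qed

lemma wirt_z_wirt_zbar_coordinate:
  fixes G :: "('v \<Rightarrow> complex) \<Rightarrow> complex"
  assumes f: "has_wirtinger_derivs f p q (z u)" and U: "open U" "z u \<in> U"
    and G: "\<And>\<zeta>. \<zeta> \<in> U \<Longrightarrow> G (z(u := \<zeta>)) = f \<zeta>"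
  shows "wirt_z u G z = p" "wirt_zbar u G z = q"
proof -
  have along: "vector_derivative (\<lambda>t::real. G (z(u := z u + c * of_real t))) (at 0) = c * p + cnj c * q"
    for c
  proof -
    have "open ((\<lambda>t::real. z u + c * of_real t) -` U)"
      by (rule open_vimage[OF U(1)]) (auto intro!: continuous_intros)
    then have "((\<lambda>t::real. G (z(u := z u + c * of_real t))) has_vector_derivative (c * p + cnj c * q)) (at 0)"
      by (rule has_vector_derivative_transform_within_open[OF has_vector_derivative_along_line[OF f]])
        (use U G in auto)
    then show ?thesis
      by (rule vector_derivative_at)
  qed
  have dx: "pdx u G z = p + q"
    using along[of 1] by (simp add: pdx_def)
  have dy: "pdy u G z = \<i> * p - \<i> * q"
    using along[of \<i>] by (simp add: pdy_def)
  show "wirt_z u G z = p" "wirt_zbar u G z = q"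
    by (simp_all add: wirt_z_def wirt_zbar_def dx dy algebra_simps)
qed

section \<open>Wirtinger derivatives of the Bloch--Wigner function\<close>

text \<open>The Bloch--Wigner function off the real axis, with Re and Im written through cnj so that the
  Wirtinger calculus rules apply to it.\<close>
definition bloch_wigner_complex :: "complex \<Rightarrow> complex" where
  "bloch_wigner_complex x =
     (Li2 x - cnj (Li2 x)) / (2 * \<i>) + (Ln x + cnj (Ln x)) / 2 * ((Ln (1 - x) - cnj (Ln (1 - x))) / (2 * \<i>))"

definition bloch_wigner_dzbar :: "complex \<Rightarrow> complex" where
  "bloch_wigner_dzbar x =
     ((Ln (1 - x) + cnj (Ln (1 - x))) * cnj (inverse x) + (Ln x + cnj (Ln x)) * cnj (inverse (1 - x))) / (4 * \<i>)"

definition bloch_wigner_dz_dzbar :: "complex \<Rightarrow> complex" where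
  "bloch_wigner_dz_dzbar x = (1 / (x * (1 - cnj x)) - 1 / (cnj x * (1 - x))) / (4 * \<i>)"

lemma bloch_wigner_eq_complex:
  assumes "Im x \<noteq> 0"
  shows "complex_of_real (bloch_wigner x) = bloch_wigner_complex x"
proof -
  have "x \<noteq> 0" "1 - x \<noteq> 0"
    using assms by auto
  then have "complex_of_real (bloch_wigner x) = of_real (Im (Li2 x)) + of_real (Re (Ln x)) * of_real (Im (Ln (1 - x)))"
    by (simp add: bloch_wigner_def Arg_eq_Im_Ln)
  then show ?thesis
    by (simp add: bloch_wigner_complex_def complex_diff_cnj complex_add_cnj algebra_simps)
qed

lemma has_wirtinger_derivs_Ln:
  "Im x \<noteq> 0 \<Longrightarrow> has_wirtinger_derivs Ln (inverse x) 0 x"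
  by (rule has_wirtinger_derivs_holomorphic, rule has_field_derivative_Ln)
    (auto simp: complex_nonpos_Reals_iff)

lemma has_wirtinger_derivs_Ln_one_minus:
  "Im x \<noteq> 0 \<Longrightarrow> has_wirtinger_derivs (\<lambda>x. Ln (1 - x)) (- inverse (1 - x)) 0 x"
  by (rule has_wirtinger_derivs_holomorphic, rule has_field_derivative_Ln_one_minus)
    (auto simp: complex_nonpos_Reals_iff)

lemma has_wirtinger_derivs_Li2:
  assumes "Im x \<noteq> 0"
  shows "has_wirtinger_derivs Li2 (- (Ln (1 - x) / x)) 0 x"
proof -
  have "x \<in> Li2_domain" "x \<noteq> 0"
    using assms by (auto simp: Li2_domain_def)
  then show ?thesis
    using has_field_derivative_Li2 has_wirtinger_derivs_holomorphic by (fastforce simp: Li2_integrand_def)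
qed

lemma has_wirtinger_derivs_bloch_wigner:
  assumes x: "Im x \<noteq> 0"
  shows "has_wirtinger_derivs (\<lambda>y. complex_of_real (bloch_wigner y))
           (cnj (bloch_wigner_dzbar x)) (bloch_wigner_dzbar x) x"
proof (rule has_wirtinger_derivs_transform_within_open)
  have nonzero: "x \<noteq> 0" "1 - x \<noteq> 0" "cnj x \<noteq> 0" "1 - cnj x \<noteq> 0"
    using x by (auto simp: complex_eq_iff)
  note Li2 = has_wirtinger_derivs_Li2[OF x] and Ln = has_wirtinger_derivs_Ln[OF x]
    and Ln1 = has_wirtinger_derivs_Ln_one_minus[OF x]
  note rules = has_wirtinger_derivs_add has_wirtinger_derivs_diff has_wirtinger_derivs_mult
    has_wirtinger_derivs_cnj
  show "has_wirtinger_derivs bloch_wigner_complex (cnj (bloch_wigner_dzbar x)) (bloch_wigner_dzbar x) x"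
    unfolding bloch_wigner_complex_def divide_inverse
    apply (rule has_wirtinger_derivs_cong)
      apply (rule rules has_wirtinger_derivs_const Li2 Ln Ln1)+
    using nonzero by (simp_all add: bloch_wigner_dzbar_def field_simps)
  show "open {y. Im y \<noteq> 0}"
    by (auto intro!: open_Collect_neq continuous_intros)
qed (use x bloch_wigner_eq_complex in auto)

lemma has_wirtinger_derivs_bloch_wigner_dzbar:
  assumes x: "Im x \<noteq> 0"
  shows "\<exists>q. has_wirtinger_derivs bloch_wigner_dzbar (bloch_wigner_dz_dzbar x) q x"
proof -
  have nonzero: "x \<noteq> 0" "1 - x \<noteq> 0" "cnj x \<noteq> 0" "1 - cnj x \<noteq> 0"
    using x by (auto simp: complex_eq_iff)
  have inv: "has_wirtinger_derivs inverse (- (inverse x * inverse x)) 0 x"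
    using \<open>x \<noteq> 0\<close> by (auto intro!: has_wirtinger_derivs_holomorphic derivative_eq_intros)
  have inv1: "has_wirtinger_derivs (\<lambda>x. inverse (1 - x)) (inverse ((1 - x) * (1 - x))) 0 x"
    using \<open>1 - x \<noteq> 0\<close>
    by (auto intro!: has_wirtinger_derivs_holomorphic derivative_eq_intros simp: field_simps)
  note Ln = has_wirtinger_derivs_Ln[OF x] and Ln1 = has_wirtinger_derivs_Ln_one_minus[OF x]
  note rules = has_wirtinger_derivs_add has_wirtinger_derivs_mult has_wirtinger_derivs_cnj
  show ?thesis
    unfolding bloch_wigner_dzbar_def divide_inverse
    apply (rule exI, rule has_wirtinger_derivs_cong)
      apply (rule rules has_wirtinger_derivs_const Ln Ln1 inv inv1)+
    using nonzero by (simp_all add: bloch_wigner_dz_dzbar_def field_simps)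
qed

definition face_shape :: "'v \<Rightarrow> 'v \<Rightarrow> 'v \<Rightarrow> ('v \<Rightarrow> complex) \<Rightarrow> complex" where
  "face_shape a b c w = (w c - w a) / (w b - w a)"

definition face_shape_dz :: "'v \<Rightarrow> 'v \<Rightarrow> 'v \<Rightarrow> 'v \<Rightarrow> ('v \<Rightarrow> complex) \<Rightarrow> complex" where
  "face_shape_dz a b c u w =
     ((of_bool (c = u) - of_bool (a = u)) * (w b - w a) - (w c - w a) * (of_bool (b = u) - of_bool (a = u)))
       / ((w b - w a) * (w b - w a))"

lemma Vol_eq_bloch_wigner_face_shape: "Vol (w a) (w b) (w c) = bloch_wigner (face_shape a b c w)"
  by (simp add: Vol_def face_shape_def)

lemma fun_upd_eq_shift: "(w(u := \<zeta>)) x = w x + of_bool (x = u) * (\<zeta> - w u :: 'a :: ring_1)"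
  by (cases "x = u") auto

lemma face_shape_nonreal_iff:
  "Im (face_shape a b c w) \<noteq> 0 \<longleftrightarrow> Im ((w c - w a) * cnj (w b - w a)) \<noteq> 0"
proof -
  have "Im (face_shape a b c w) = Im ((w c - w a) * cnj (w b - w a)) / (cmod (w b - w a))\<^sup>2"
    by (simp add: face_shape_def Im_divide cmod_power2 algebra_simps)
  then show ?thesis
    by (cases "w b = w a") auto
qed

lemma face_shape_nonreal_imp_distinct:
  assumes "Im (face_shape a b c w) \<noteq> 0"
  shows "w b \<noteq> w a" "w c \<noteq> w a" "w c \<noteq> w b"
  using assms by (auto simp: face_shape_def split: if_splits)

lemma has_field_derivative_face_shape:
  assumes "w b \<noteq> w a"
  shows "((\<lambda>\<zeta>. face_shape a b c (w(u := \<zeta>))) has_field_derivative face_shape_dz a b c u w) (at (w u))"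
  unfolding face_shape_def fun_upd_eq_shift
  by (rule derivative_eq_intros refl)+ (use assms in \<open>simp_all add: face_shape_dz_def algebra_simps\<close>)

lemma field_differentiable_face_shape_dz:
  assumes "w b \<noteq> w a"
  shows "(\<lambda>\<zeta>. face_shape_dz a b c v (w(u := \<zeta>))) field_differentiable at (w u)"
  unfolding face_shape_dz_def fun_upd_eq_shift field_differentiable_def
  apply (rule exI)
  apply (rule derivative_eq_intros refl)+
  using assms apply simp
  apply (rule refl)
  done

lemma open_nonreal_face_shapes:
  assumes "finite F"
  shows "open {\<zeta>. \<forall>f\<in>F. Im (face_shape (a f) (b f) (c f) (w(u := \<zeta>))) \<noteq> 0}"
proof -
  have "{\<zeta>. \<forall>f\<in>F. Im (face_shape (a f) (b f) (c f) (w(u := \<zeta>))) \<noteq> 0} =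
      (\<Inter>f\<in>F. {\<zeta>. Im (((w(u := \<zeta>)) (c f) - (w(u := \<zeta>)) (a f)) * cnj ((w(u := \<zeta>)) (b f) - (w(u := \<zeta>)) (a f))) \<noteq> 0})"
    by (auto simp only: face_shape_nonreal_iff)
  also have "open \<dots>"
    unfolding fun_upd_eq_shift
    by (intro open_INT assms ballI open_Collect_neq) (auto intro!: continuous_intros)
  finally show ?thesis .
qed

lemma has_wirtinger_derivs_bloch_wigner_face_shape:
  assumes "Im (face_shape a b c w) \<noteq> 0"
  shows "has_wirtinger_derivs (\<lambda>\<zeta>. complex_of_real (bloch_wigner (face_shape a b c (w(v := \<zeta>)))))
     (cnj (bloch_wigner_dzbar (face_shape a b c w)) * face_shape_dz a b c v w)
     (bloch_wigner_dzbar (face_shape a b c w) * cnj (face_shape_dz a b c v w)) (w v)"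
  using has_wirtinger_derivs_compose_holomorphic[OF _ has_field_derivative_face_shape]
    has_wirtinger_derivs_bloch_wigner[OF assms] face_shape_nonreal_imp_distinct[OF assms]
  by simp

lemma has_wirtinger_derivs_bloch_wigner_dzbar_face_shape:
  assumes "Im (face_shape a b c z) \<noteq> 0"
  shows "\<exists>q. has_wirtinger_derivs
     (\<lambda>\<zeta>. bloch_wigner_dzbar (face_shape a b c (z(u := \<zeta>))) * cnj (face_shape_dz a b c v (z(u := \<zeta>))))
     (bloch_wigner_dz_dzbar (face_shape a b c z) * face_shape_dz a b c u z * cnj (face_shape_dz a b c v z)) q (z u)"
proof -
  note distinct = face_shape_nonreal_imp_distinct[OF assms]
  obtain q where "has_wirtinger_derivs bloch_wigner_dzbar (bloch_wigner_dz_dzbar (face_shape a b c z)) q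
      (face_shape a b c (z(u := z u)))"
    using has_wirtinger_derivs_bloch_wigner_dzbar[OF assms] by auto
  note dzbar = has_wirtinger_derivs_compose_holomorphic[OF this has_field_derivative_face_shape[where w = z and u = u, OF distinct(1)]]
  obtain d where "((\<lambda>\<zeta>. face_shape_dz a b c v (z(u := \<zeta>))) has_field_derivative d) (at (z u))"
    using field_differentiable_face_shape_dz[where w = z and u = u and v = v, OF distinct(1)] by (auto simp: field_differentiable_def)
  note dz = has_wirtinger_derivs_cnj[OF has_wirtinger_derivs_holomorphic[OF this]]
  show ?thesis
    using has_wirtinger_derivs_mult[OF dzbar dz] by auto
qed

lemma wirt_zbar_sum_bloch_wigner:
  fixes a b c :: "'f \<Rightarrow> 'v"
  assumes "finite F" and "\<forall>f\<in>F. Im (face_shape (a f) (b f) (c f) w) \<noteq> 0"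
  shows "wirt_zbar v (\<lambda>w. complex_of_real (- (\<Sum>f\<in>F. bloch_wigner (face_shape (a f) (b f) (c f) w)))) w =
    - (\<Sum>f\<in>F. bloch_wigner_dzbar (face_shape (a f) (b f) (c f) w) * cnj (face_shape_dz (a f) (b f) (c f) v w))"
proof -
  have "has_wirtinger_derivs
      (\<lambda>\<zeta>. - (\<Sum>f\<in>F. complex_of_real (bloch_wigner (face_shape (a f) (b f) (c f) (w(v := \<zeta>))))))
      (- (\<Sum>f\<in>F. cnj (bloch_wigner_dzbar (face_shape (a f) (b f) (c f) w)) * face_shape_dz (a f) (b f) (c f) v w))
      (- (\<Sum>f\<in>F. bloch_wigner_dzbar (face_shape (a f) (b f) (c f) w) * cnj (face_shape_dz (a f) (b f) (c f) v w)))
      (w v)"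
    using assms
    by (intro has_wirtinger_derivs_minus has_wirtinger_derivs_sum has_wirtinger_derivs_bloch_wigner_face_shape) auto
  then show ?thesis
    by (rule wirt_z_wirt_zbar_coordinate(2)[where U = UNIV]) auto
qed

lemma wirt_z_wirt_zbar_sum_bloch_wigner:
  fixes a b c :: "'f \<Rightarrow> 'v"
  assumes "finite F" and nonreal: "\<forall>f\<in>F. Im (face_shape (a f) (b f) (c f) z) \<noteq> 0"
  shows "wirt_z u (wirt_zbar v (\<lambda>w. complex_of_real (- (\<Sum>f\<in>F. bloch_wigner (face_shape (a f) (b f) (c f) w))))) z =
    - (\<Sum>f\<in>F. bloch_wigner_dz_dzbar (face_shape (a f) (b f) (c f) z)
                * face_shape_dz (a f) (b f) (c f) u z * cnj (face_shape_dz (a f) (b f) (c f) v z))"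
proof -
  have "\<exists>q. has_wirtinger_derivs
      (\<lambda>\<zeta>. \<Sum>f\<in>F. bloch_wigner_dzbar (face_shape (a f) (b f) (c f) (z(u := \<zeta>)))
             * cnj (face_shape_dz (a f) (b f) (c f) v (z(u := \<zeta>))))
      (\<Sum>f\<in>F. bloch_wigner_dz_dzbar (face_shape (a f) (b f) (c f) z)
             * face_shape_dz (a f) (b f) (c f) u z * cnj (face_shape_dz (a f) (b f) (c f) v z))
      q (z u)"
    using nonreal
    by (intro has_wirtinger_derivs_sum_ex assms(1) has_wirtinger_derivs_bloch_wigner_dzbar_face_shape) auto
  then obtain q where "has_wirtinger_derivs
      (\<lambda>\<zeta>. - (\<Sum>f\<in>F. bloch_wigner_dzbar (face_shape (a f) (b f) (c f) (z(u := \<zeta>)))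
             * cnj (face_shape_dz (a f) (b f) (c f) v (z(u := \<zeta>)))))
      (- (\<Sum>f\<in>F. bloch_wigner_dz_dzbar (face_shape (a f) (b f) (c f) z)
             * face_shape_dz (a f) (b f) (c f) u z * cnj (face_shape_dz (a f) (b f) (c f) v z)))
      q (z u)"
    using has_wirtinger_derivs_minus by blast
  then show ?thesis
    by (rule wirt_z_wirt_zbar_coordinate(1)[OF _ open_nonreal_face_shapes[where a = a and b = b and c = c and w = z and u = u, OF assms(1)]])
      (use nonreal in \<open>simp_all add: wirt_zbar_sum_bloch_wigner[OF assms(1)] del: of_real_minus of_real_sum\<close>)
qed

section \<open>The Hessian of one face as a product of incidence matrices\<close>

lemma hessian_rational_identity:
  fixes x y X Y da db dc Ea Eb Ec ix iy iw iX iY iW :: complex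
  assumes "x * ix = 1" "y * iy = 1" "(x - y) * iw = 1" "X * iX = 1" "Y * iY = 1" "(X - Y) * iW = 1"
  shows "- ((x * Y - y * X) * ix * iX * iy * iY * iw * iW * ((dc - da) * x - y * (db - da)) * ((Ec - Ea) * X - Y * (Eb - Ea)))
   = - ((db - da) * ix) * ((Eb - Ec) * iW) - ((db - dc) * iw) * ((Ec - Ea) * iY) - ((dc - da) * iy) * ((Eb - Ea) * iX)
     + ((db - dc) * iw) * ((Eb - Ea) * iX) + ((dc - da) * iy) * ((Eb - Ec) * iW) + ((db - da) * ix) * ((Ec - Ea) * iY)"
  using assms by algebra

lemma bloch_wigner_dz_dzbar_face_identity:
  fixes za zb zc da db dc ea eb ec :: complex
  defines "U \<equiv> (zc - za) / (zb - za)"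
  assumes ne: "zb \<noteq> za" "zc \<noteq> za" "zc \<noteq> zb" and im: "Im U \<noteq> 0"
  shows "- (bloch_wigner_dz_dzbar U * (((dc - da) * (zb - za) - (zc - za) * (db - da)) / ((zb - za) * (zb - za)))
            * cnj (((ec - ea) * (zb - za) - (zc - za) * (eb - ea)) / ((zb - za) * (zb - za))))
   = (1 / (4 * \<i>)) * (
      - ((da / (za - zb) + db / (zb - za)) * cnj (eb / (zb - zc) + ec / (zc - zb)))
      - (db / (zb - zc) + dc / (zc - zb)) * cnj (ec / (zc - za) + ea / (za - zc))
      - (dc / (zc - za) + da / (za - zc)) * cnj (ea / (za - zb) + eb / (zb - za))
      + (db / (zb - zc) + dc / (zc - zb)) * cnj (ea / (za - zb) + eb / (zb - za))
      + (dc / (zc - za) + da / (za - zc)) * cnj (eb / (zb - zc) + ec / (zc - zb))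
      + (da / (za - zb) + db / (zb - za)) * cnj (ec / (zc - za) + ea / (za - zc)))"
proof -
  define x where "x = zb - za"
  define y where "y = zc - za"
  have n1: "x \<noteq> 0" "y \<noteq> 0" "x - y \<noteq> 0"
    using ne by (auto simp: x_def y_def)
  then have n2: "cnj x \<noteq> 0" "cnj y \<noteq> 0" "cnj x - cnj y \<noteq> 0"
    by (metis complex_cnj_zero_iff complex_cnj_diff)+
  have "U \<noteq> 0" "1 - U \<noteq> 0" "cnj U \<noteq> 0" "1 - cnj U \<noteq> 0"
    using im by (auto simp: complex_eq_iff)
  then have r: "bloch_wigner_dz_dzbar U =
      (1 / (4 * \<i>)) * (x * cnj x * (x * cnj y - y * cnj x) / (y * cnj y * (x - y) * (cnj x - cnj y)))"
    using n1 n2 unfolding bloch_wigner_dz_dzbar_def U_def x_def[symmetric] y_def[symmetric]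
    by (simp add: field_simps)
  have e: "za - zb = - x" "zb - za = x" "zc - za = y" "za - zc = - y" "zb - zc = x - y" "zc - zb = - (x - y)"
    by (auto simp: x_def y_def)
  have inv: "x * inverse x = 1" "y * inverse y = 1" "(x - y) * inverse (x - y) = 1"
    "cnj x * inverse (cnj x) = 1" "cnj y * inverse (cnj y) = 1" "(cnj x - cnj y) * inverse (cnj x - cnj y) = 1"
    using n1 n2 by auto
  note identity = hessian_rational_identity[OF inv, of dc da db "cnj ec" "cnj ea" "cnj eb"]
  show ?thesis
    unfolding r e
    apply (simp only: divide_inverse complex_cnj_mult complex_cnj_inverse complex_cnj_diff complex_cnj_minus
        complex_cnj_add inverse_minus_eq inverse_mult_distrib)
    using identity inv by algebra
qed

definition face_Emat :: "'v \<Rightarrow> 'v \<Rightarrow> 'v \<Rightarrow> 'v set \<Rightarrow> 'v set \<Rightarrow> complex" where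
  "face_Emat a b c e e' =
     (if e = {a,b} \<and> e' = {b,c} then -1 else 0) + (if e = {b,c} \<and> e' = {c,a} then -1 else 0) +
     (if e = {c,a} \<and> e' = {a,b} then -1 else 0) + (if e = {b,c} \<and> e' = {a,b} then 1 else 0) +
     (if e = {c,a} \<and> e' = {b,c} then 1 else 0) + (if e = {a,b} \<and> e' = {c,a} then 1 else 0)"

lemma face_Emat_rotate: "face_Emat a b c e e' = face_Emat b c a e e'"
proof -
  have "{c,a} = {a,c}"
    by auto
  then show ?thesis
    unfolding face_Emat_def by (simp only: add.commute add.left_commute)
qed

lemma face_Emat_eq_0:
  assumes "e \<union> e' \<noteq> {a,b,c}"
  shows "face_Emat a b c e e' = 0"
proof -
  have not: "\<not> (e = x \<and> e' = y)" if "x \<union> y = {a,b,c}" for x y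
    using assms that by blast
  have "{a,b} \<union> {b,c} = {a,b,c}" "{b,c} \<union> {c,a} = {a,b,c}" "{c,a} \<union> {a,b} = {a,b,c}"
    "{b,c} \<union> {a,b} = {a,b,c}" "{c,a} \<union> {b,c} = {a,b,c}" "{a,b} \<union> {c,a} = {a,b,c}"
    by auto
  then show ?thesis
    unfolding face_Emat_def by (simp only: not if_False) simp
qed

lemma face_Emat_follows: "distinct [a, b, c] \<Longrightarrow> face_Emat a b c {a,b} {b,c} = -1"
  by (auto simp: face_Emat_def doubleton_eq_iff)

lemma face_Emat_precedes: "distinct [a, b, c] \<Longrightarrow> face_Emat a b c {b,c} {a,b} = 1"
  by (auto simp: face_Emat_def doubleton_eq_iff)

lemma sum_sum_delta:
  assumes "finite X" "P \<in> X" "Q \<in> X"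
  shows "(\<Sum>e\<in>X. \<Sum>e'\<in>X. if e = P \<and> e' = Q then h e e' else 0) = h P Q"
proof -
  have "(\<Sum>e'\<in>X. if e = P \<and> e' = Q then h e e' else 0) = (if e = P then h e Q else 0)" for e
    by (cases "e = P") (simp_all add: assms sum.delta)
  then show ?thesis
    by (simp add: assms sum.delta)
qed

lemma sum_sum_face_Emat:
  fixes X :: "'v set set"
  assumes "finite X" and "{a,b} \<in> X" "{b,c} \<in> X" "{c,a} \<in> X"
  shows "(\<Sum>e\<in>X. \<Sum>e'\<in>X. A e * face_Emat a b c e e' * C e') =
     - (A {a,b} * C {b,c}) - A {b,c} * C {c,a} - A {c,a} * C {a,b}
     + A {b,c} * C {a,b} + A {c,a} * C {b,c} + A {a,b} * C {c,a}"
proof -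
  have mult_if: "A e * (if P then k else 0) * C e' = (if P then k * (A e * C e') else 0)" for P k e e'
    by simp
  have "A e * face_Emat a b c e e' * C e' =
      (if e = {a,b} \<and> e' = {b,c} then -1 * (A e * C e') else 0) + (if e = {b,c} \<and> e' = {c,a} then -1 * (A e * C e') else 0) +
      (if e = {c,a} \<and> e' = {a,b} then -1 * (A e * C e') else 0) + (if e = {b,c} \<and> e' = {a,b} then 1 * (A e * C e') else 0) +
      (if e = {c,a} \<and> e' = {b,c} then 1 * (A e * C e') else 0) + (if e = {a,b} \<and> e' = {c,a} then 1 * (A e * C e') else 0)"
    for e e'
    unfolding face_Emat_def by (simp only: distrib_left distrib_right mult_if)
  then show ?thesis
    by (simp only: sum.distrib sum_sum_delta[OF assms(1)] assms(2-4)) simp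
qed

lemma Amat_doubleton:
  assumes "x \<noteq> y"
  shows "Amat z u {x,y} = of_bool (x = u) / (z x - z y) + of_bool (y = u) / (z y - z x)"
proof -
  have "(THE w. w \<in> {x,y} \<and> w \<noteq> x) = y" "(THE w. w \<in> {x,y} \<and> w \<noteq> y) = x"
    using assms by (auto intro: the_equality)
  then show ?thesis
    using assms by (auto simp: Amat_def)
qed

lemma face_hessian_eq_Amat_face_Emat:
  assumes nonreal: "Im (face_shape a b c z) \<noteq> 0"
    and X: "finite X" "{a,b} \<in> X" "{b,c} \<in> X" "{c,a} \<in> X"
  shows "- (bloch_wigner_dz_dzbar (face_shape a b c z) * face_shape_dz a b c u z * cnj (face_shape_dz a b c v z))
    = 1 / (4 * \<i>) * (\<Sum>e\<in>X. \<Sum>e'\<in>X. Amat z u e * face_Emat a b c e e' * cnj (Amat z v e'))"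
proof -
  note distinct = face_shape_nonreal_imp_distinct[OF nonreal]
  then have "a \<noteq> b" "b \<noteq> c" "c \<noteq> a"
    by auto
  show ?thesis
    using nonreal
    unfolding sum_sum_face_Emat[OF X] Amat_doubleton[OF \<open>a \<noteq> b\<close>] Amat_doubleton[OF \<open>b \<noteq> c\<close>]
      Amat_doubleton[OF \<open>c \<noteq> a\<close>] face_shape_def face_shape_dz_def
    by (rule bloch_wigner_dz_dzbar_face_identity[OF distinct])
qed

section \<open>Oriented triangulations\<close>

definition vertex1 :: "('v \<times> 'v \<times> 'v) set \<Rightarrow> 'v set \<Rightarrow> 'v" where
  "vertex1 pos f = fst (listing pos f)"

definition vertex2 :: "('v \<times> 'v \<times> 'v) set \<Rightarrow> 'v set \<Rightarrow> 'v" where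
  "vertex2 pos f = fst (snd (listing pos f))"

definition vertex3 :: "('v \<times> 'v \<times> 'v) set \<Rightarrow> 'v set \<Rightarrow> 'v" where
  "vertex3 pos f = snd (snd (listing pos f))"

lemma action_eq_sum_face_shape:
  "action S pos w = - (\<Sum>f\<in>S. bloch_wigner (face_shape (vertex1 pos f) (vertex2 pos f) (vertex3 pos f) w))"
  by (simp add: action_def vertex1_def vertex2_def vertex3_def split_beta Vol_eq_bloch_wigner_face_shape)

locale oriented_triangulation =
  fixes S :: "'v set set" and pos :: "('v \<times> 'v \<times> 'v) set"
  assumes orientation: "orientation S pos"
    and card_face: "\<And>f. f \<in> S \<Longrightarrow> card f = 3"
    and finite_faces: "finite S"
begin

lemma pos_face: "(a, b, c) \<in> pos \<Longrightarrow> {a, b, c} \<in> S"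
  using orientation unfolding orientation_def by fast

lemma pos_rotate: "(a, b, c) \<in> pos \<Longrightarrow> (b, c, a) \<in> pos"
  using orientation unfolding orientation_def by fast

lemma pos_not_reverse: "(a, b, c) \<in> pos \<Longrightarrow> (a, c, b) \<notin> pos"
  using orientation unfolding orientation_def by fast

lemma pos_distinct:
  assumes "(a, b, c) \<in> pos"
  shows "distinct [a, b, c]"
  using card_face[OF pos_face[OF assms]] by (auto simp: card_insert_if split: if_splits)

lemma listing_in_pos: "f \<in> S \<Longrightarrow> (vertex1 pos f, vertex2 pos f, vertex3 pos f) \<in> pos"
  and face_eq_listing: "f \<in> S \<Longrightarrow> f = {vertex1 pos f, vertex2 pos f, vertex3 pos f}"
proof -
  assume "f \<in> S"
  moreover have "\<forall>f\<in>S. \<exists>a b c. (a, b, c) \<in> pos \<and> f = {a, b, c}"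
    using orientation unfolding orientation_def by (elim conjE)
  ultimately obtain a b c where "(a, b, c) \<in> pos" "f = {a, b, c}"
    by blast
  then have "\<exists>t. t \<in> pos \<and> f = {fst t, fst (snd t), snd (snd t)}"
    by (intro exI[of _ "(a, b, c)"]) simp
  then have "listing pos f \<in> pos \<and> f = {fst (listing pos f), fst (snd (listing pos f)), snd (snd (listing pos f))}"
    unfolding listing_def by (rule someI_ex)
  then show "(vertex1 pos f, vertex2 pos f, vertex3 pos f) \<in> pos" "f = {vertex1 pos f, vertex2 pos f, vertex3 pos f}"
    by (simp_all add: vertex1_def vertex2_def vertex3_def)
qed

lemma pos_same_face:
  assumes "(a, b, c) \<in> pos" "(x, y, w) \<in> pos" and "{x, y, w} = {a, b, c}"
  shows "(x, y, w) \<in> {(a,b,c), (b,c,a), (c,a,b)}"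
proof -
  have "x \<in> {a,b,c}" "y \<in> {a,b,c}" "w \<in> {a,b,c}"
    using assms(3) by auto
  moreover have "(a,c,b) \<notin> pos" "(b,a,c) \<notin> pos" "(c,b,a) \<notin> pos"
    using assms(1) pos_not_reverse pos_rotate by blast+
  ultimately show ?thesis
    using assms(2) pos_distinct[OF assms(1)] pos_distinct[OF assms(2)] by auto
qed

lemma listing_rotation:
  assumes "(a, b, c) \<in> pos"
  shows "(vertex1 pos {a,b,c}, vertex2 pos {a,b,c}, vertex3 pos {a,b,c}) \<in> {(a,b,c), (b,c,a), (c,a,b)}"
  using pos_same_face[OF assms listing_in_pos face_eq_listing[symmetric]] pos_face[OF assms] by blast

lemma face_Emat_listing:
  assumes "(a, b, c) \<in> pos"
  shows "face_Emat (vertex1 pos {a,b,c}) (vertex2 pos {a,b,c}) (vertex3 pos {a,b,c}) e e' = face_Emat a b c e e'"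
  using listing_rotation[OF assms] face_Emat_rotate[of a b c] face_Emat_rotate[of b c a] by auto

lemma sum_face_Emat_single:
  assumes "(a, b, c) \<in> pos" and "e \<union> e' = {a,b,c}"
  shows "(\<Sum>f\<in>S. face_Emat (vertex1 pos f) (vertex2 pos f) (vertex3 pos f) e e') = face_Emat a b c e e'"
proof -
  have "face_Emat (vertex1 pos f) (vertex2 pos f) (vertex3 pos f) e e' = 0" if "f \<in> S - {{a,b,c}}" for f
  proof (rule face_Emat_eq_0)
    show "e \<union> e' \<noteq> {vertex1 pos f, vertex2 pos f, vertex3 pos f}"
      using that assms(2) face_eq_listing[of f] by auto
  qed
  then have "(\<Sum>f\<in>S - {{a,b,c}}. face_Emat (vertex1 pos f) (vertex2 pos f) (vertex3 pos f) e e') = 0"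
    by (simp add: sum.neutral)
  then show ?thesis
    by (simp add: sum.remove[OF finite_faces pos_face[OF assms(1)]] face_Emat_listing[OF assms(1)])
qed

lemma face_Emat_nonzero:
  assumes "(a, b, c) \<in> pos" and "face_Emat a b c e e' \<noteq> 0"
  shows "(\<exists>a b c. (a,b,c) \<in> pos \<and> e = {a,b} \<and> e' = {b,c}) \<or> (\<exists>a b c. (a,b,c) \<in> pos \<and> e = {b,c} \<and> e' = {a,b})"
proof (rule ccontr)
  assume none: "\<not> ?thesis"
  have "(b, c, a) \<in> pos" "(c, a, b) \<in> pos"
    using assms(1) pos_rotate by blast+
  then have "\<not> (e = {a,b} \<and> e' = {b,c})" "\<not> (e = {b,c} \<and> e' = {c,a})" "\<not> (e = {c,a} \<and> e' = {a,b})"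
    "\<not> (e = {b,c} \<and> e' = {a,b})" "\<not> (e = {c,a} \<and> e' = {b,c})" "\<not> (e = {a,b} \<and> e' = {c,a})"
    using none assms(1) by blast+
  then have "face_Emat a b c e e' = 0"
    unfolding face_Emat_def by (simp only: if_False) simp
  with assms(2) show False
    by contradiction
qed

lemma Emat_eq_sum_face_Emat:
  "Emat pos e e' = (\<Sum>f\<in>S. face_Emat (vertex1 pos f) (vertex2 pos f) (vertex3 pos f) e e')"
proof (cases "\<exists>a b c. (a,b,c) \<in> pos \<and> e = {a,b} \<and> e' = {b,c}")
  case True
  then obtain a b c where abc: "(a,b,c) \<in> pos" "e = {a,b}" "e' = {b,c}"
    by blast
  have "distinct [a, b, c]"
    using abc(1) by (rule pos_distinct)
  then have "e \<noteq> e'"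
    using abc by (auto simp: doubleton_eq_iff)
  then have "Emat pos e e' = -1"
    using True by (simp add: Emat_def)
  also have "\<dots> = face_Emat a b c e e'"
    using face_Emat_follows[OF \<open>distinct [a, b, c]\<close>] abc by simp
  also have "\<dots> = (\<Sum>f\<in>S. face_Emat (vertex1 pos f) (vertex2 pos f) (vertex3 pos f) e e')"
    by (rule sym, rule sum_face_Emat_single[OF abc(1)]) (auto simp: abc)
  finally show ?thesis .
next
  case not_follows: False
  show ?thesis
  proof (cases "\<exists>a b c. (a,b,c) \<in> pos \<and> e = {b,c} \<and> e' = {a,b}")
    case True
    then obtain a b c where abc: "(a,b,c) \<in> pos" "e = {b,c}" "e' = {a,b}"
      by blast
    have "distinct [a, b, c]"
      using abc(1) by (rule pos_distinct)
    then have "e \<noteq> e'"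
      using abc by (auto simp: doubleton_eq_iff)
    then have "Emat pos e e' = 1"
      using True not_follows by (simp add: Emat_def)
    also have "\<dots> = face_Emat a b c e e'"
      using face_Emat_precedes[OF \<open>distinct [a, b, c]\<close>] abc by simp
    also have "\<dots> = (\<Sum>f\<in>S. face_Emat (vertex1 pos f) (vertex2 pos f) (vertex3 pos f) e e')"
      by (rule sym, rule sum_face_Emat_single[OF abc(1)]) (auto simp: abc)
    finally show ?thesis .
  next
    case False
    then have "face_Emat (vertex1 pos f) (vertex2 pos f) (vertex3 pos f) e e' = 0" if "f \<in> S" for f
      using not_follows face_Emat_nonzero[OF listing_in_pos[OF that]] by blast
    moreover have "Emat pos e e' = 0"
      using not_follows False by (simp add: Emat_def)
    ultimately show ?thesis
      by (simp add: sum.neutral)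
  qed
qed

lemma listing_edges:
  assumes "f \<in> S"
  shows "{vertex1 pos f, vertex2 pos f} \<in> edges S" "{vertex2 pos f, vertex3 pos f} \<in> edges S"
    "{vertex3 pos f, vertex1 pos f} \<in> edges S"
  using pos_distinct[OF listing_in_pos[OF assms]] face_eq_listing[OF assms] assms
  by (auto simp: edges_def intro!: bexI[of _ f])

lemma nondegenerate_face_shape:
  assumes "f \<in> S" and "nondegenerate z f"
  shows "Im (face_shape (vertex1 pos f) (vertex2 pos f) (vertex3 pos f) z) \<noteq> 0"
proof -
  have "vertex1 pos f \<in> f" "vertex2 pos f \<in> f" "vertex3 pos f \<in> f"
    by (subst face_eq_listing[OF assms(1)], simp)+
  then show ?thesis
    using assms(2) pos_distinct[OF listing_in_pos[OF assms(1)]]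
    unfolding nondegenerate_def face_shape_def by (metis distinct_length_2_or_more)
qed

end

theorem proposition4:
  fixes S :: "('v::finite) set set"
    and pos :: "('v \<times> 'v \<times> 'v) set"
    and z :: "'v \<Rightarrow> complex"
  assumes "sphere_triangulation S"
    and "orientation S pos"
    and "inj z"
    and "\<forall>f\<in>S. nondegenerate z f"
  shows "\<forall>u v. wirt_z u (wirt_zbar v (\<lambda>w. complex_of_real (action S pos w))) z =
           (1 / (4 * \<i>)) * (\<Sum>e\<in>edges S. \<Sum>e'\<in>edges S. Amat z u e * Emat pos e e' * cnj (Amat z v e'))"
proof (intro allI)
  fix u v
  interpret oriented_triangulation S pos
    using assms(1,2) by unfold_locales (auto simp: sphere_triangulation_def)
  let ?a = "vertex1 pos" and ?b = "vertex2 pos" and ?c = "vertex3 pos"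
  have nonreal: "\<forall>f\<in>S. Im (face_shape (?a f) (?b f) (?c f) z) \<noteq> 0"
    using assms(4) nondegenerate_face_shape by blast
  have "wirt_z u (wirt_zbar v (\<lambda>w. complex_of_real (action S pos w))) z =
      - (\<Sum>f\<in>S. bloch_wigner_dz_dzbar (face_shape (?a f) (?b f) (?c f) z)
                 * face_shape_dz (?a f) (?b f) (?c f) u z * cnj (face_shape_dz (?a f) (?b f) (?c f) v z))"
    unfolding action_eq_sum_face_shape by (rule wirt_z_wirt_zbar_sum_bloch_wigner[OF finite_faces nonreal])
  also have "\<dots> = (\<Sum>f\<in>S. 1 / (4 * \<i>) *
      (\<Sum>e\<in>edges S. \<Sum>e'\<in>edges S. Amat z u e * face_Emat (?a f) (?b f) (?c f) e e' * cnj (Amat z v e')))"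
    unfolding sum_negf[symmetric]
    using nonreal listing_edges by (intro sum.cong refl face_hessian_eq_Amat_face_Emat) auto
  also have "\<dots> = 1 / (4 * \<i>) * (\<Sum>e\<in>edges S. \<Sum>e'\<in>edges S. Amat z u e * Emat pos e e' * cnj (Amat z v e'))"
    unfolding Emat_eq_sum_face_Emat sum_distrib_left sum_distrib_right
    by (subst sum.swap[of _ S], subst sum.swap[of _ S]) (simp add: mult.assoc)
  finally show "wirt_z u (wirt_zbar v (\<lambda>w. complex_of_real (action S pos w))) z =
      1 / (4 * \<i>) * (\<Sum>e\<in>edges S. \<Sum>e'\<in>edges S. Amat z u e * Emat pos e e' * cnj (Amat z v e'))" .
qed

end
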